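(* Let $n\geq2$ be finite, let $\mathfrak{A}\in TA_n$ be countable and let $X\subseteq A$ satisfy $\prod X=0$. Then there are a permutable set $V$ and an injective homomorphism $f:\mathfrak{A}\to\wp(V)$ such that $\bigcap_{x\in X}f(x)=\emptyset$.
   Context: $TA_n=\mathbf{Mod}(\Sigma_n)$, where $\Sigma_n$ consists of the Boolean algebra axioms, the equations saying each $s_{ij}$ ($i\neq j<n$) is a Boolean endomorphism, and $t_1(x)=t_2(x)$ for all words $t_1,t_2$ in the $s_{ij}$ whose associated compositions of transpositions $[i,j]$ coincide in $S_n$. A set $V\subseteq{}^nU$ is permutable if $s\circ[i,j]\in V$ whenever $s\in V$, $i\neq j<n$. $\wp(V)=\langle\mathcal P(V);\cap,-,S_{ij}\rangle$ with complement relative to $V$ and $S_{ij}(Y)=\{q\in V:q\circ[i,j]\in Y\}$. *)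

theory Defs
  imports Main "HOL-Library.Countable_Set"
begin

definition tr :: "nat \<Rightarrow> nat \<Rightarrow> nat \<Rightarrow> nat" where
  "tr i j k = (if k = i then j else if k = j then i else k)"

text \<open>Words in the s_ij: lists of index pairs (i,j) with i \<noteq> j < n.\<close>
definition valid_word :: "nat \<Rightarrow> (nat \<times> nat) list \<Rightarrow> bool" where
  "valid_word n w = (\<forall>(i,j)\<in>set w. i \<noteq> j \<and> i < n \<and> j < n)"

definition word_app :: "(nat \<Rightarrow> nat \<Rightarrow> 'a \<Rightarrow> 'a) \<Rightarrow> (nat \<times> nat) list \<Rightarrow> 'a \<Rightarrow> 'a" where
  "word_app s w x = foldr (\<lambda>(i,j) y. s i j y) w x"

definition word_perm :: "(nat \<times> nat) list \<Rightarrow> nat \<Rightarrow> nat" where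
  "word_perm w = foldr (\<lambda>(i,j) p. tr i j \<circ> p) w id"

text \<open>A Boolean algebra (the type 'a, with operations inf and uminus) with
  operators s_ij is in TA_n = Mod(Sigma_n).\<close>
definition TA :: "nat \<Rightarrow> (nat \<Rightarrow> nat \<Rightarrow> 'a::boolean_algebra \<Rightarrow> 'a) \<Rightarrow> bool" where
  "TA n s =
    ((\<forall>i j. i \<noteq> j \<and> i < n \<and> j < n \<longrightarrow>
        (\<forall>x y. s i j (inf x y) = inf (s i j x) (s i j y) \<and> s i j (- x) = - s i j x)) \<and>
     (\<forall>w1 w2. valid_word n w1 \<and> valid_word n w2 \<and> word_perm w1 = word_perm w2 \<longrightarrow>
        (\<forall>x. word_app s w1 x = word_app s w2 x)))"

definition prod_is_zero :: "'a::boolean_algebra set \<Rightarrow> bool" where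
  "prod_is_zero X = (\<forall>y. (\<forall>x\<in>X. y \<le> x) \<longrightarrow> y = bot)"

text \<open>n-tuples are lists of length n; q o [i,j].\<close>
definition perm_seq :: "'u list \<Rightarrow> nat \<Rightarrow> nat \<Rightarrow> 'u list" where
  "perm_seq q i j = map (\<lambda>k. q ! tr i j k) [0..<length q]"

definition permutable :: "nat \<Rightarrow> 'u list set \<Rightarrow> bool" where
  "permutable n V = (\<forall>q\<in>V. \<forall>i j. i \<noteq> j \<and> i < n \<and> j < n \<longrightarrow> perm_seq q i j \<in> V)"

definition S_op :: "'u list set \<Rightarrow> nat \<Rightarrow> nat \<Rightarrow> 'u list set \<Rightarrow> 'u list set" where
  "S_op V i j Y = {q\<in>V. perm_seq q i j \<in> Y}"

text \<open>f is a homomorphism from the algebra (type 'a, inf, uminus, s) into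
  wp(V) = (Pow V, \<inter>, V - _, S_ij).\<close>
definition hom_wp :: "nat \<Rightarrow> (nat \<Rightarrow> nat \<Rightarrow> 'a::boolean_algebra \<Rightarrow> 'a) \<Rightarrow> 'u list set \<Rightarrow> ('a \<Rightarrow> 'u list set) \<Rightarrow> bool" where
  "hom_wp n s V f =
    ((\<forall>x. f x \<subseteq> V) \<and>
     (\<forall>x y. f (inf x y) = f x \<inter> f y) \<and>
     (\<forall>x. f (- x) = V - f x) \<and>
     (\<forall>i j x. i \<noteq> j \<and> i < n \<and> j < n \<longrightarrow> f (s i j x) = S_op V i j (f x)))"

end

theory Submission
  imports Defs
begin

text \<open>
  For each nonzero element \<open>a\<close>, a Rasiowa--Sikorski construction along an enumeration of
  the countable algebra yields an ultrafilter \<open>F\<^sub>a \<ni> a\<close> that omits every translate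
  \<open>s\<^sub>w[X]\<close> of \<open>X\<close> by a word \<open>w\<close>; this is possible because each \<open>s\<^sub>w\<close> is a Boolean
  automorphism, so \<open>\<Prod>s\<^sub>w[X] = 0\<close> as well. The point set \<open>V\<close> consists of countably many
  disjoint copies of \<open>S\<^sub>n\<close>, the \<open>k\<close>-th one living on the block \<open>{kn, \<dots>, kn+n-1}\<close> of
  natural numbers, \<open>k\<close> enumerating the nonzero elements: the tuple of block \<open>k\<close> permuted
  by \<open>\<pi>\<^sub>w\<close> lies in \<open>f(x)\<close> iff \<open>s\<^sub>w(x)\<close> belongs to the ultrafilter chosen for the
  \<open>k\<close>-th element. Permuting a tuple by \<open>[i,j]\<close> appends \<open>(i,j)\<close> to \<open>w\<close>, which makes
  \<open>f\<close> a homomorphism; the axioms of \<open>TA\<^sub>n\<close> make it well defined, the \<open>F\<^sub>a\<close> make it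
  injective, and the omission property makes \<open>\<Inter>\<^sub>x\<^sub>\<in>\<^sub>X f(x)\<close> empty.
\<close>

lemma word_app_Nil [simp]: "word_app s [] x = x"
  by (simp add: word_app_def)

lemma word_app_Cons [simp]: "word_app s ((i, j) # w) x = s i j (word_app s w x)"
  by (simp add: word_app_def)

lemma word_app_append: "word_app s (u @ v) x = word_app s u (word_app s v x)"
  by (simp add: word_app_def)

lemma valid_word_Nil [simp]: "valid_word n []"
  by (simp add: valid_word_def)

lemma valid_word_Cons [simp]:
  "valid_word n ((i, j) # w) \<longleftrightarrow> i \<noteq> j \<and> i < n \<and> j < n \<and> valid_word n w"
  by (simp add: valid_word_def)

lemma valid_word_append [simp]: "valid_word n (u @ v) \<longleftrightarrow> valid_word n u \<and> valid_word n v"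
  by (auto simp: valid_word_def)

lemma valid_word_rev [simp]: "valid_word n (rev w) \<longleftrightarrow> valid_word n w"
  by (auto simp: valid_word_def)

lemma word_perm_Nil [simp]: "word_perm [] = id"
  by (simp add: word_perm_def)

lemma word_perm_Cons [simp]: "word_perm ((i, j) # w) = tr i j \<circ> word_perm w"
  by (simp add: word_perm_def)

lemma word_perm_append: "word_perm (u @ v) = word_perm u \<circ> word_perm v"
  by (induction u) (auto simp: comp_assoc)

lemma tr_tr [simp]: "tr i j (tr i j m) = m"
  by (simp add: tr_def)

lemma word_perm_rev_append: "word_perm (rev w @ w) = id"
proof (induction w)
  case (Cons p w)
  obtain i j where "p = (i, j)" by force
  with Cons show ?case
    by (simp add: word_perm_append fun_eq_iff)
qed simp

lemma word_perm_less: "valid_word n w \<Longrightarrow> m < n \<Longrightarrow> word_perm w m < n"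
  by (induction w arbitrary: m) (auto simp: tr_def)

lemma word_perm_fixes: "valid_word n w \<Longrightarrow> n \<le> m \<Longrightarrow> word_perm w m = m"
  by (induction w arbitrary: m) (auto simp: tr_def)

section \<open>Consequences of the axioms of \<open>TA\<^sub>n\<close>\<close>

lemma TA_inf: "TA n s \<Longrightarrow> i \<noteq> j \<Longrightarrow> i < n \<Longrightarrow> j < n \<Longrightarrow> s i j (inf x y) = inf (s i j x) (s i j y)"
  unfolding TA_def by blast

lemma TA_compl: "TA n s \<Longrightarrow> i \<noteq> j \<Longrightarrow> i < n \<Longrightarrow> j < n \<Longrightarrow> s i j (- x) = - s i j x"
  unfolding TA_def by blast

lemma TA_word_app_eq:
  "TA n s \<Longrightarrow> valid_word n w1 \<Longrightarrow> valid_word n w2 \<Longrightarrow> word_perm w1 = word_perm w2 \<Longrightarrow>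
    word_app s w1 x = word_app s w2 x"
  unfolding TA_def by blast

lemma word_app_inf:
  assumes "TA n s" "valid_word n w"
  shows "word_app s w (inf x y) = inf (word_app s w x) (word_app s w y)"
  using assms(2) by (induction w) (use assms(1) in \<open>auto simp: TA_inf\<close>)

lemma word_app_compl:
  assumes "TA n s" "valid_word n w"
  shows "word_app s w (- x) = - word_app s w x"
  using assms(2) by (induction w) (use assms(1) in \<open>auto simp: TA_compl\<close>)

lemma word_app_mono:
  assumes "TA n s" "valid_word n w" "x \<le> y"
  shows "word_app s w x \<le> word_app s w y"
  by (metis assms inf.absorb_iff1 word_app_inf)

lemma word_app_bot:
  assumes "TA n s" "valid_word n w"
  shows "word_app s w bot = bot"
  by (metis assms inf_compl_bot word_app_compl word_app_inf)

lemma word_app_top: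
  assumes "TA n s" "valid_word n w"
  shows "word_app s w top = top"
  by (metis assms compl_bot_eq word_app_bot word_app_compl)

lemma word_app_rev_cancel:
  assumes "TA n s" "valid_word n w"
  shows "word_app s (rev w) (word_app s w x) = x"
proof -
  have "word_app s (rev w) (word_app s w x) = word_app s (rev w @ w) x"
    by (simp add: word_app_append)
  also have "\<dots> = word_app s [] x"
    using assms by (intro TA_word_app_eq) (auto simp: word_perm_rev_append)
  finally show ?thesis by simp
qed

lemma prod_is_zero_word_app_image:
  assumes "TA n s" "valid_word n w" "prod_is_zero X"
  shows "prod_is_zero (word_app s w ` X)"
  unfolding prod_is_zero_def
proof (intro allI impI)
  fix y assume "\<forall>z\<in>word_app s w ` X. y \<le> z"
  then have "\<forall>x\<in>X. word_app s (rev w) y \<le> x"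
    using assms word_app_mono[of n s "rev w"] word_app_rev_cancel by fastforce
  then have "word_app s (rev w) y = bot"
    using assms(3) by (simp add: prod_is_zero_def)
  then show "y = bot"
    using word_app_rev_cancel[of n s "rev w" y] word_app_bot[of n s w] assms(1,2) by simp
qed

lemma prod_is_zero_bot: "prod_is_zero {bot}"
  by (auto simp: prod_is_zero_def bot_unique)

section \<open>Omitting types: the Rasiowa--Sikorski lemma\<close>

lemma prod_is_zero_meets_compl:
  assumes "prod_is_zero Y" "c \<noteq> bot"
  shows "\<exists>y\<in>Y. inf c (- y) \<noteq> bot"
  using assms by (auto simp: prod_is_zero_def inf_shunt)

definition omit_step :: "'a::boolean_algebra set \<Rightarrow> 'a \<Rightarrow> 'a" where
  "omit_step Y c = inf c (- (SOME y. y \<in> Y \<and> inf c (- y) \<noteq> bot))"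

definition decide_step :: "'a::boolean_algebra \<Rightarrow> 'a \<Rightarrow> 'a" where
  "decide_step e c = (if inf c e \<noteq> bot then inf c e else inf c (- e))"

lemma omit_step:
  assumes "prod_is_zero Y" "c \<noteq> bot"
  shows "omit_step Y c \<noteq> bot" "omit_step Y c \<le> c" "\<exists>y\<in>Y. omit_step Y c \<le> - y"
proof -
  let ?y = "SOME y. y \<in> Y \<and> inf c (- y) \<noteq> bot"
  have y: "?y \<in> Y \<and> inf c (- ?y) \<noteq> bot"
    using someI_ex prod_is_zero_meets_compl[OF assms] by (metis (mono_tags, lifting))
  then show "omit_step Y c \<noteq> bot" "omit_step Y c \<le> c"
    by (auto simp: omit_step_def)
  show "\<exists>y\<in>Y. omit_step Y c \<le> - y"
    unfolding omit_step_def using y by (intro bexI[of _ ?y]) auto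
qed

lemma decide_step:
  assumes "c \<noteq> bot"
  shows "decide_step e c \<noteq> bot" "decide_step e c \<le> c" "decide_step e c \<le> e \<or> decide_step e c \<le> - e"
proof -
  have "inf c e \<noteq> bot \<or> inf c (- e) \<noteq> bot"
    using assms by (metis inf_sup_distrib1 sup_bot.right_neutral sup_compl_top inf_top_right)
  then show "decide_step e c \<noteq> bot" "decide_step e c \<le> c" "decide_step e c \<le> e \<or> decide_step e c \<le> - e"
    by (auto simp: decide_step_def)
qed

definition ultrafilter_set :: "'a::boolean_algebra set \<Rightarrow> bool" where
  "ultrafilter_set F \<longleftrightarrow> (\<forall>x y. inf x y \<in> F \<longleftrightarrow> x \<in> F \<and> y \<in> F) \<and> (\<forall>x. - x \<in> F \<longleftrightarrow> x \<notin> F)"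

lemma ultrafilter_set_top:
  assumes "ultrafilter_set F"
  shows "top \<in> F"
proof -
  have "bot \<notin> F"
  proof
    assume "bot \<in> F"
    then have "- bot \<in> F"
      using assms inf_bot_left[of top] unfolding ultrafilter_set_def by (metis compl_bot_eq)
    with \<open>bot \<in> F\<close> show False
      using assms unfolding ultrafilter_set_def by blast
  qed
  then show ?thesis
    using assms unfolding ultrafilter_set_def by (metis compl_bot_eq)
qed

lemma ultrafilter_set_chain:
  fixes c :: "nat \<Rightarrow> 'a::boolean_algebra"
  assumes nonbot: "\<And>k. c k \<noteq> bot" and decreasing: "\<And>k. c (Suc k) \<le> c k"
    and decides: "\<And>x. \<exists>k. c k \<le> x \<or> c k \<le> - x"
  shows "ultrafilter_set {x. \<exists>k. c k \<le> x}"
proof -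
  define F where "F = {x. \<exists>k. c k \<le> x}"
  have antimono: "c m \<le> c k" if "k \<le> m" for k m
    using lift_Suc_antimono_le[of c, OF decreasing that] .
  have F_inf: "inf x y \<in> F \<longleftrightarrow> x \<in> F \<and> y \<in> F" for x y
  proof
    assume "x \<in> F \<and> y \<in> F"
    then obtain k m where "c k \<le> x" "c m \<le> y"
      by (auto simp: F_def)
    then have "c (max k m) \<le> inf x y"
      using antimono[of k "max k m"] antimono[of m "max k m"] by auto
    then show "inf x y \<in> F"
      by (auto simp: F_def)
  qed (auto simp: F_def)
  have F_compl: "- x \<in> F \<longleftrightarrow> x \<notin> F" for x
  proof
    assume "- x \<in> F"
    moreover have "inf x (- x) \<notin> F"
      using nonbot by (auto simp: F_def bot_unique)
    ultimately show "x \<notin> F"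
      using F_inf by blast
  next
    assume "x \<notin> F"
    then show "- x \<in> F"
      using decides[of x] by (auto simp: F_def)
  qed
  show ?thesis
    using F_inf F_compl by (simp add: ultrafilter_set_def F_def)
qed

lemma Rasiowa_Sikorski:
  fixes a :: "'a::boolean_algebra" and Y :: "'i::countable \<Rightarrow> 'a set"
  assumes "countable (UNIV :: 'a set)" "\<And>i. prod_is_zero (Y i)" "a \<noteq> bot"
  shows "\<exists>F. ultrafilter_set F \<and> a \<in> F \<and> (\<forall>i. \<exists>y\<in>Y i. y \<notin> F)"
proof -
  obtain g :: "'a \<Rightarrow> nat" where "inj g"
    using assms(1) by (auto simp: countable_def)
  define e where "e = inv g"
  have e_g: "e (g x) = x" for x
    by (simp add: e_def \<open>inj g\<close>)
  define c where "c = rec_nat a (\<lambda>k c. decide_step (e k) (omit_step (Y (from_nat k)) c))"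
  have c_0: "c 0 = a" and c_Suc: "c (Suc k) = decide_step (e k) (omit_step (Y (from_nat k)) (c k))" for k
    by (simp_all add: c_def)
  have c_nonbot: "c k \<noteq> bot" for k
    by (induction k) (simp_all add: c_0 c_Suc assms(2,3) omit_step(1) decide_step(1))
  have omit_nonbot: "omit_step (Y (from_nat k)) (c k) \<noteq> bot" for k
    using omit_step(1)[OF assms(2) c_nonbot] .
  have c_Suc_le: "c (Suc k) \<le> c k" for k
    using decide_step(2)[OF omit_nonbot] omit_step(2)[OF assms(2) c_nonbot]
    unfolding c_Suc by (rule order_trans)
  have c_Suc_omits: "\<exists>y\<in>Y (from_nat k). c (Suc k) \<le> - y" for k
    using omit_step(3)[OF assms(2) c_nonbot[of k]] decide_step(2)[OF omit_nonbot[of k]]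
    unfolding c_Suc by (meson order_trans)
  have c_Suc_decides: "c (Suc k) \<le> e k \<or> c (Suc k) \<le> - e k" for k
    using decide_step(3)[OF omit_nonbot] unfolding c_Suc .
  define F where "F = {x. \<exists>k. c k \<le> x}"
  have "\<exists>k. c k \<le> x \<or> c k \<le> - x" for x
    using c_Suc_decides[of "g x"] by (auto simp: e_g)
  then have F: "ultrafilter_set F"
    unfolding F_def using ultrafilter_set_chain c_nonbot c_Suc_le by blast
  moreover have "\<exists>y\<in>Y i. y \<notin> F" for i
  proof -
    obtain y where "y \<in> Y i" "c (Suc (to_nat i)) \<le> - y"
      using c_Suc_omits[of "to_nat i"] by auto
    then have "- y \<in> F"
      by (auto simp: F_def)
    with F \<open>y \<in> Y i\<close> show ?thesis
      by (auto simp: ultrafilter_set_def)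
  qed
  moreover have "a \<in> F"
    using c_0 by (auto simp: F_def)
  ultimately show ?thesis
    by blast
qed

section \<open>The representation on blocks of tuples\<close>

definition block_tuple :: "nat \<Rightarrow> nat \<Rightarrow> (nat \<times> nat) list \<Rightarrow> nat list" where
  "block_tuple n k w = map (\<lambda>m. k * n + word_perm w m) [0..<n]"

lemma block_tuple_eq_iff:
  assumes "0 < n" "valid_word n w" "valid_word n w'"
  shows "block_tuple n k w = block_tuple n k' w' \<longleftrightarrow> k = k' \<and> word_perm w = word_perm w'"
proof
  assume "block_tuple n k w = block_tuple n k' w'"
  then have entries: "k * n + word_perm w m = k' * n + word_perm w' m" if "m < n" for m
    using that by (simp add: block_tuple_def list_eq_iff_nth_eq)
  have "k = (k * n + word_perm w 0) div n" "k' = (k' * n + word_perm w' 0) div n"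
    using assms word_perm_less by simp_all
  then have "k = k'"
    using entries[OF assms(1)] by simp
  moreover have "word_perm w m = word_perm w' m" for m
    using entries[of m] \<open>k = k'\<close> word_perm_fixes[OF assms(2)] word_perm_fixes[OF assms(3)]
    by (cases "m < n") auto
  ultimately show "k = k' \<and> word_perm w = word_perm w'"
    by auto
qed (simp add: block_tuple_def)

lemma perm_seq_block_tuple:
  assumes "i < n" "j < n"
  shows "perm_seq (block_tuple n k w) i j = block_tuple n k (w @ [(i, j)])"
proof -
  have "tr i j m < n" if "m < n" for m
    using assms that by (simp add: tr_def)
  then show ?thesis
    by (simp add: perm_seq_def block_tuple_def word_perm_append)
qed

locale tuple_representation =
  fixes n :: nat and s :: "nat \<Rightarrow> nat \<Rightarrow> 'a::boolean_algebra \<Rightarrow> 'a"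
    and F :: "nat \<Rightarrow> 'a set" and K :: "nat set"
  assumes TA: "TA n s" and n_pos: "0 < n" and ultrafilter: "k \<in> K \<Longrightarrow> ultrafilter_set (F k)"
begin

lemma F_inf: "k \<in> K \<Longrightarrow> inf x y \<in> F k \<longleftrightarrow> x \<in> F k \<and> y \<in> F k"
  using ultrafilter by (simp add: ultrafilter_set_def)

lemma F_compl: "k \<in> K \<Longrightarrow> - x \<in> F k \<longleftrightarrow> x \<notin> F k"
  using ultrafilter by (simp add: ultrafilter_set_def)

lemma F_top: "k \<in> K \<Longrightarrow> top \<in> F k"
  using ultrafilter ultrafilter_set_top by blast

definition rep :: "'a \<Rightarrow> nat list set" where
  "rep x = {block_tuple n k w | k w. k \<in> K \<and> valid_word n w \<and> word_app s w x \<in> F k}"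

lemma rep_elem: "q \<in> rep x \<Longrightarrow> \<exists>k w. valid_word n w \<and> q = block_tuple n k w"
  by (auto simp: rep_def)

lemma block_tuple_in_rep:
  assumes "valid_word n w"
  shows "block_tuple n k w \<in> rep x \<longleftrightarrow> k \<in> K \<and> word_app s w x \<in> F k"
proof
  assume "block_tuple n k w \<in> rep x"
  then obtain k' w' where "k' \<in> K" "valid_word n w'" "word_app s w' x \<in> F k'"
    and "block_tuple n k w = block_tuple n k' w'"
    by (auto simp: rep_def)
  with assms show "k \<in> K \<and> word_app s w x \<in> F k"
    using block_tuple_eq_iff[OF n_pos] TA_word_app_eq[OF TA] by metis
qed (use assms in \<open>auto simp: rep_def\<close>)

lemma block_tuple_in_rep_top:
  "valid_word n w \<Longrightarrow> block_tuple n k w \<in> rep top \<longleftrightarrow> k \<in> K"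
  using block_tuple_in_rep word_app_top[OF TA] F_top by metis

lemma rep_subset_top: "rep x \<subseteq> rep top"
  using rep_elem block_tuple_in_rep block_tuple_in_rep_top by blast

lemma rep_eqI:
  assumes "Y \<subseteq> rep top"
    and "\<And>k w. valid_word n w \<Longrightarrow> k \<in> K \<Longrightarrow> block_tuple n k w \<in> rep x \<longleftrightarrow> block_tuple n k w \<in> Y"
  shows "rep x = Y"
  using assms rep_elem rep_subset_top block_tuple_in_rep_top by blast

lemma hom_wp_rep: "hom_wp n s (rep top) rep"
  unfolding hom_wp_def
proof (intro conjI allI impI)
  note block_tuple_in_rep [simp]
  show "rep x \<subseteq> rep top" for x
    by (rule rep_subset_top)
  show "rep (inf x y) = rep x \<inter> rep y" for x y
    by (rule rep_eqI) (use rep_subset_top in \<open>auto simp: word_app_inf[OF TA] F_inf\<close>)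
  show "rep (- x) = rep top - rep x" for x
    by (rule rep_eqI) (auto simp: word_app_compl[OF TA] word_app_top[OF TA] F_compl F_top)
  fix i j x assume ij: "i \<noteq> j \<and> i < n \<and> j < n"
  show "rep (s i j x) = S_op (rep top) i j (rep x)"
    by (rule rep_eqI)
      (use ij in \<open>auto simp: S_op_def perm_seq_block_tuple word_app_append word_app_top[OF TA] F_top\<close>)
qed

lemma permutable_rep_top: "permutable n (rep top)"
  unfolding permutable_def
  using rep_elem block_tuple_in_rep_top perm_seq_block_tuple by fastforce

lemma length_rep: "q \<in> rep x \<Longrightarrow> length q = n"
  by (auto simp: rep_def block_tuple_def)

lemma inj_rep:
  assumes "\<And>a. a \<noteq> bot \<Longrightarrow> \<exists>k\<in>K. a \<in> F k"
  shows "inj rep"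
proof (rule injI)
  have "x \<le> y" if "rep x = rep y" for x y
  proof (rule ccontr)
    assume "\<not> x \<le> y"
    then have "inf x (- y) \<noteq> bot"
      by (simp add: inf_shunt)
    then obtain k where "k \<in> K" "inf x (- y) \<in> F k"
      using assms by blast
    then have "x \<in> F k" "y \<notin> F k"
      using F_inf F_compl by auto
    then show False
      using that block_tuple_in_rep[of "[]" k] \<open>k \<in> K\<close> by auto
  qed
  then show "rep x = rep y \<Longrightarrow> x = y" for x y
    by (metis antisym)
qed

lemma rep_omits:
  assumes "\<And>k w. k \<in> K \<Longrightarrow> valid_word n w \<Longrightarrow> \<exists>x\<in>X. word_app s w x \<notin> F k"
  shows "rep top \<inter> (\<Inter>x\<in>X. rep x) = {}"
proof (rule equals0I)
  fix q assume "q \<in> rep top \<inter> (\<Inter>x\<in>X. rep x)"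
  then have q_top: "q \<in> rep top" and q_X: "\<And>x. x \<in> X \<Longrightarrow> q \<in> rep x"
    by auto
  obtain k w where w: "valid_word n w" and q_eq: "q = block_tuple n k w"
    using rep_elem[OF q_top] by blast
  have "k \<in> K"
    using q_top block_tuple_in_rep_top[OF w] q_eq by blast
  then obtain x where "x \<in> X" "word_app s w x \<notin> F k"
    using assms w by blast
  then show False
    using q_X block_tuple_in_rep[OF w] q_eq by blast
qed

end

theorem corollary3p20:
  fixes n :: nat and s :: "nat \<Rightarrow> nat \<Rightarrow> 'a::boolean_algebra \<Rightarrow> 'a" and X :: "'a set"
  assumes "n \<ge> 2"
    and "TA n s"
    and "countable (UNIV :: 'a set)"
    and "prod_is_zero X"
  shows "\<exists>(U :: nat set) (V :: nat list set) (f :: 'a \<Rightarrow> nat list set).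
           V \<subseteq> {q. length q = n \<and> set q \<subseteq> U} \<and> permutable n V \<and>
           hom_wp n s V f \<and> inj f \<and> V \<inter> (\<Inter>x\<in>X. f x) = {}"
proof -
  obtain g :: "'a \<Rightarrow> nat" where "inj g"
    using assms(3) by (auto simp: countable_def)
  define K where "K = {k. inv g k \<noteq> bot}"
  \<comment> \<open>invalid words impose no condition, since no ultrafilter contains \<open>bot\<close>\<close>
  define Y where "Y w = (if valid_word n w then word_app s w ` X else {bot})" for w
  have Y_zero: "prod_is_zero (Y w)" for w
    using prod_is_zero_word_app_image[OF assms(2) _ assms(4)] prod_is_zero_bot by (auto simp: Y_def)
  then have "\<forall>k. \<exists>G. k \<in> K \<longrightarrow> ultrafilter_set G \<and> inv g k \<in> G \<and> (\<forall>w. \<exists>y\<in>Y w. y \<notin> G)"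
    using Rasiowa_Sikorski[where Y = Y, OF assms(3) Y_zero] by (simp add: K_def)
  from choice[OF this] obtain F
    where F: "\<forall>k. k \<in> K \<longrightarrow> ultrafilter_set (F k) \<and> inv g k \<in> F k \<and> (\<forall>w. \<exists>y\<in>Y w. y \<notin> F k)"
    by blast
  interpret tuple_representation n s F K
    using assms(1,2) F by unfold_locales auto
  have "\<exists>k\<in>K. a \<in> F k" if "a \<noteq> bot" for a
    using F[rule_format, of "g a"] that \<open>inj g\<close> by (intro bexI[of _ "g a"]) (simp_all add: K_def inv_f_f)
  then have "inj rep"
    by (rule inj_rep)
  moreover have "rep top \<inter> (\<Inter>x\<in>X. rep x) = {}"
  proof (rule rep_omits)
    fix k w assume "k \<in> K" "valid_word n w"
    then obtain y where "y \<in> Y w" "y \<notin> F k"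
      using F by blast
    with \<open>valid_word n w\<close> show "\<exists>x\<in>X. word_app s w x \<notin> F k"
      by (auto simp: Y_def)
  qed
  ultimately show ?thesis
    using hom_wp_rep permutable_rep_top length_rep by blast
qed

end
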